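(* Let $\alpha>0$ be a constant and let $n$ be an integer with \[ 3 \le n < 10+4\alpha . \] Then the solution curve of the generalized Gelfand problem \[ u''+\frac{n-1}{r}u'+\lambda r^{\alpha}e^{u}=0 \quad (0<r<1), \qquad u'(0)=0,\quad u(1)=0, \] makes infinitely many turns. That is, with $w$ and $\lambda(t)$ as in the context, $\lambda'(t)$ changes sign infinitely many times on $(0,\infty)$.
   Context: Here $\lambda>0$ is a parameter. Let $w(t)$ be the solution of the initial value problem \[ w''+\frac{n-1}{t}w'+t^{\alpha}e^{w}=0, \qquad w(0)=0,\quad w'(0)=0 \qquad (t>0). \] This solution is negative and decreasing and is defined for all $t>0$. For each $t>0$, the function $u(r)=w(tr)-w(t)$ solves the boundary value problem with $\lambda=\lambda(t):=t^{\alpha+2}e^{w(t)}$, and all solutions arise in this way. The solution curve is the parametrized curve \[ t\mapsto(\lambda,u(0))=\bigl(t^{\alpha+2}e^{w(t)},\,-w(t)\bigr), \qquad t\in(0,\infty). \] A turn of the curve is a change of sign of $\lambda'(t)$. *)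

theory Defs
  imports "HOL-Analysis.Analysis"
begin

definition infinitely_many_sign_changes :: "(real \<Rightarrow> real) \<Rightarrow> real set \<Rightarrow> bool" where
  "infinitely_many_sign_changes f S \<longleftrightarrow>
     (\<forall>N::nat. \<exists>t::nat \<Rightarrow> real. (\<forall>i\<le>N. t i \<in> S) \<and>
        (\<forall>i<N. t i < t (Suc i) \<and> f (t i) * f (t (Suc i)) < 0))"

definition gelfand_lambda :: "real \<Rightarrow> (real \<Rightarrow> real) \<Rightarrow> real \<Rightarrow> real" where
  "gelfand_lambda \<alpha> w t = t powr (\<alpha> + 2) * exp (w t)"

end

theory Submission
  imports Defs
begin

text \<open>In the Emden--Fowler variables \<open>s = ln t\<close>, \<open>v(s) = w(e\<^sup>s) + (\<alpha> + 2) s\<close>,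
  \<open>y = v'\<close>, the sign of \<open>\<lambda>'(e\<^sup>s)\<close> is the sign of \<open>y(s)\<close>, and \<open>v\<close> solves the
  autonomous damped oscillator \<open>v'' + m v' + e\<^sup>v = c\<close> with \<open>m = n - 2\<close>, \<open>c = m (\<alpha> + 2)\<close>.
  The bound \<open>n < 10 + 4 \<alpha>\<close> says exactly \<open>c > m\<^sup>2 / 4\<close>: the linearisation at the
  equilibrium \<open>v = ln c\<close> is underdamped.
  The energy \<open>y\<^sup>2 / 2 + e\<^sup>v - c v\<close> decreases, so \<open>y + m v\<close> stays bounded; as its
  derivative is \<open>c - e\<^sup>v\<close>, \<open>e\<^sup>v\<close> cannot stay away from \<open>c\<close>. Hence if \<open>y\<close> eventually
  kept one sign, \<open>v\<close> would approach \<open>ln c\<close> monotonically from one side, and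
  \<open>p = exp(m s / 2) |v - ln c|\<close> would be a nonnegative solution of \<open>p'' \<le> -\<epsilon> p\<close>, which must
  vanish. But the trajectory cannot sit at the equilibrium, by backward uniqueness, since
  \<open>y(s) \<rightarrow> \<alpha> + 2\<close> as \<open>s \<rightarrow> -\<infinity>\<close>.\<close>

lemma increment_le_of_deriv_le:
  fixes f f' :: "real \<Rightarrow> real"
  assumes "a \<le> b"
    and "\<And>x. a \<le> x \<Longrightarrow> x \<le> b \<Longrightarrow> (f has_real_derivative f' x) (at x)"
    and "\<And>x. a \<le> x \<Longrightarrow> x \<le> b \<Longrightarrow> f' x \<le> K"
  shows "f b - f a \<le> K * (b - a)"
proof -
  have "(\<lambda>x. f x - K * x) b \<le> (\<lambda>x. f x - K * x) a"
  proof (rule DERIV_nonpos_imp_nonincreasing[OF assms(1)])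
    fix x assume "a \<le> x" "x \<le> b"
    then show "\<exists>y. ((\<lambda>x. f x - K * x) has_real_derivative y) (at x) \<and> y \<le> 0"
      using DERIV_diff[OF assms(2) DERIV_cmult_Id, of x K] assms(3)[of x] by force
  qed
  then show ?thesis by (simp add: algebra_simps)
qed

lemma increment_ge_of_deriv_ge:
  fixes f f' :: "real \<Rightarrow> real"
  assumes "a \<le> b"
    and "\<And>x. a \<le> x \<Longrightarrow> x \<le> b \<Longrightarrow> (f has_real_derivative f' x) (at x)"
    and "\<And>x. a \<le> x \<Longrightarrow> x \<le> b \<Longrightarrow> K \<le> f' x"
  shows "K * (b - a) \<le> f b - f a"
proof -
  have "(- f b) - (- f a) \<le> - K * (b - a)"
    using assms by (intro increment_le_of_deriv_le[of a b _ "\<lambda>x. - f' x"]) (auto intro: DERIV_minus)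
  then show ?thesis by simp
qed

lemma unbounded_of_deriv_ge_pos:
  fixes f f' :: "real \<Rightarrow> real"
  assumes "\<And>x. S \<le> x \<Longrightarrow> (f has_real_derivative f' x) (at x)"
    and "\<And>x. S \<le> x \<Longrightarrow> \<delta> \<le> f' x" and "\<delta> > 0"
  shows "\<not> (\<forall>x\<ge>S. \<bar>f x\<bar> \<le> B)"
proof
  assume bound: "\<forall>x\<ge>S. \<bar>f x\<bar> \<le> B"
  define b where "b = S + (2 * B + 1) / \<delta>"
  have "0 \<le> B" using bound by (meson abs_ge_zero order.refl order.trans)
  then have "S \<le> b" using \<open>\<delta> > 0\<close> by (simp add: b_def)
  then have "\<delta> * (b - S) \<le> f b - f S"
    using assms by (intro increment_ge_of_deriv_ge) auto
  moreover have "\<delta> * (b - S) = 2 * B + 1" using \<open>\<delta> > 0\<close> by (simp add: b_def)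
  ultimately show False
    using bound[rule_format, of b] bound[rule_format, of S] \<open>S \<le> b\<close> by (simp add: abs_le_iff)
qed

lemma deriv_nonneg_of_nonneg_of_deriv_antimono:
  fixes p p' :: "real \<Rightarrow> real"
  assumes deriv: "\<And>x. x > S \<Longrightarrow> (p has_real_derivative p' x) (at x)"
    and nonneg: "\<And>x. x > S \<Longrightarrow> p x \<ge> 0"
    and antimono: "\<And>a b. S < a \<Longrightarrow> a \<le> b \<Longrightarrow> p' b \<le> p' a"
    and "s > S"
  shows "p' s \<ge> 0"
proof (rule ccontr)
  assume "\<not> p' s \<ge> 0"
  define b where "b = s + (p s + 1) / - p' s"
  have "(p s + 1) / - p' s \<ge> 0"
    using nonneg[of s] \<open>s > S\<close> \<open>\<not> p' s \<ge> 0\<close> by (intro divide_nonneg_pos) auto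
  then have "s \<le> b" by (simp add: b_def)
  then have "p b - p s \<le> p' s * (b - s)"
    using \<open>s > S\<close> by (intro increment_le_of_deriv_le[of s b p p' "p' s"] deriv antimono) auto
  also have "\<dots> = - (p s + 1)" using \<open>\<not> p' s \<ge> 0\<close> by (simp add: b_def)
  finally show False using nonneg[of b] \<open>s \<le> b\<close> \<open>s > S\<close> by simp
qed

text \<open>Sturm comparison with \<open>p'' = -\<epsilon> p\<close>: first \<open>p'' \<le> 0\<close> makes \<open>p\<close> nondecreasing,
  then \<open>p'' \<le> -\<epsilon> p(s)\<close> beyond \<open>s\<close> drives \<open>p'\<close> negative.\<close>

lemma nonneg_eq_0_of_second_deriv_le:
  fixes p p' p'' :: "real \<Rightarrow> real"
  assumes d1: "\<And>x. x > S \<Longrightarrow> (p has_real_derivative p' x) (at x)"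
    and d2: "\<And>x. x > S \<Longrightarrow> (p' has_real_derivative p'' x) (at x)"
    and nonneg: "\<And>x. x > S \<Longrightarrow> p x \<ge> 0"
    and le: "\<And>x. x > S \<Longrightarrow> p'' x \<le> - \<epsilon> * p x"
    and "\<epsilon> > 0" and "s > S"
  shows "p s = 0"
proof (rule ccontr)
  assume "p s \<noteq> 0"
  with nonneg[OF \<open>s > S\<close>] have "p s > 0" by linarith
  have p''_nonpos: "p'' x \<le> 0" if "x > S" for x
  proof -
    have "\<epsilon> * p x \<ge> 0" using nonneg[OF that] \<open>\<epsilon> > 0\<close> by simp
    then show ?thesis using le[OF that] by linarith
  qed
  have p'_nonneg: "p' x \<ge> 0" if "x > S" for x
  proof (rule deriv_nonneg_of_nonneg_of_deriv_antimono[OF d1 nonneg _ that])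
    fix a b assume "S < a" "a \<le> b"
    then show "p' b \<le> p' a"
      using increment_le_of_deriv_le[of a b p' p'' 0] d2 p''_nonpos by force
  qed
  have p_mono: "p a \<le> p b" if "S < a" "a \<le> b" for a b
    using increment_ge_of_deriv_ge[of a b p p' 0] d1 p'_nonneg that by force
  define b where "b = s + (p' s + 1) / (\<epsilon> * p s)"
  have "s \<le> b"
    using p'_nonneg[of s] \<open>s > S\<close> \<open>p s > 0\<close> \<open>\<epsilon> > 0\<close> by (simp add: b_def)
  have "p' b - p' s \<le> - \<epsilon> * p s * (b - s)"
  proof (rule increment_le_of_deriv_le[OF \<open>s \<le> b\<close>])
    fix x assume "s \<le> x" "x \<le> b"
    then show "(p' has_real_derivative p'' x) (at x)" using d2 \<open>s > S\<close> by simp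
    have "\<epsilon> * p s \<le> \<epsilon> * p x"
      using p_mono[of s x] \<open>s \<le> x\<close> \<open>s > S\<close> \<open>\<epsilon> > 0\<close> by simp
    then show "p'' x \<le> - \<epsilon> * p s" using le[of x] \<open>s \<le> x\<close> \<open>s > S\<close> by simp
  qed
  also have "\<dots> = - (p' s + 1)" using \<open>p s > 0\<close> \<open>\<epsilon> > 0\<close> by (simp add: b_def)
  finally show False using p'_nonneg[of b] \<open>s \<le> b\<close> \<open>s > S\<close> by simp
qed

lemma eq_0_of_deriv_ge_neg_multiple:
  fixes D D' :: "real \<Rightarrow> real"
  assumes "s0 \<le> s1"
    and deriv: "\<And>x. s0 \<le> x \<Longrightarrow> x \<le> s1 \<Longrightarrow> (D has_real_derivative D' x) (at x)"
    and ge: "\<And>x. s0 \<le> x \<Longrightarrow> x \<le> s1 \<Longrightarrow> K * D x + D' x \<ge> 0"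
    and "D s0 \<ge> 0" and "D s1 = 0"
  shows "D s0 = 0"
proof -
  have "0 * (s1 - s0) \<le> exp (K * s1) * D s1 - exp (K * s0) * D s0"
  proof (rule increment_ge_of_deriv_ge[OF \<open>s0 \<le> s1\<close>])
    fix x assume "s0 \<le> x" "x \<le> s1"
    then show "((\<lambda>x. exp (K * x) * D x) has_real_derivative exp (K * x) * (K * D x + D' x)) (at x)"
      by (auto intro!: derivative_eq_intros deriv simp: algebra_simps)
    show "0 \<le> exp (K * x) * (K * D x + D' x)" using ge \<open>s0 \<le> x\<close> \<open>x \<le> s1\<close> by simp
  qed
  then show ?thesis using \<open>D s0 \<ge> 0\<close> \<open>D s1 = 0\<close> by (simp add: mult_le_0_iff)
qed

lemma cross_terms_le_sum_squares:
  fixes a b e C m :: real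
  assumes "\<bar>e\<bar> \<le> C * \<bar>a\<bar>" and "0 \<le> C" and "0 \<le> m"
  shows "- 2 * a * b - 2 * b * e + 2 * m * b\<^sup>2 \<le> (1 + C + 2 * m) * (a\<^sup>2 + b\<^sup>2)"
proof -
  have ab: "2 * \<bar>a\<bar> * \<bar>b\<bar> \<le> a\<^sup>2 + b\<^sup>2"
    using zero_le_power2[of "\<bar>a\<bar> - \<bar>b\<bar>"] by (simp add: power2_diff)
  have "- 2 * a * b \<le> a\<^sup>2 + b\<^sup>2"
    using ab abs_ge_minus_self[of "a * b"] by (simp add: abs_mult)
  moreover have "- 2 * b * e \<le> C * (a\<^sup>2 + b\<^sup>2)"
  proof -
    have "- 2 * b * e \<le> 2 * \<bar>b\<bar> * \<bar>e\<bar>"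
      using abs_ge_minus_self[of "b * e"] by (simp add: abs_mult)
    also have "\<dots> \<le> 2 * \<bar>b\<bar> * (C * \<bar>a\<bar>)" using assms(1) by (simp add: mult_left_mono)
    also have "\<dots> \<le> C * (a\<^sup>2 + b\<^sup>2)"
      using mult_left_mono[OF ab assms(2)] by (simp add: algebra_simps)
    finally show ?thesis .
  qed
  moreover have "2 * m * b\<^sup>2 \<le> 2 * m * (a\<^sup>2 + b\<^sup>2)" using assms(3) by (simp add: mult_left_mono)
  ultimately show ?thesis by (simp add: algebra_simps)
qed
lemma abs_exp_minus_one_le: "\<bar>exp x - 1\<bar> \<le> exp \<bar>x\<bar> * \<bar>x\<bar>" for x :: real
proof -
  obtain z where "\<bar>z\<bar> \<le> \<bar>x\<bar>" "exp x = 1 + exp z * x"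
    using Maclaurin_exp_le[of x 1] by auto
  then show ?thesis by (simp add: abs_mult mult_right_mono)
qed

lemma exp_le_quadratic_of_nonpos:
  fixes x :: real
  assumes "x \<le> 0"
  shows "exp x \<le> 1 + x + x\<^sup>2 / 2"
proof -
  obtain z where "exp x = 1 + x + x\<^sup>2 / 2 + exp z / 6 * x ^ 3"
    using Maclaurin_exp_le[of x 3] by (auto simp: numeral_3_eq_3 power2_eq_square)
  moreover have "exp z / 6 * x ^ 3 \<le> 0"
    using assms by (intro mult_nonneg_nonpos) (auto simp: power_odd_eq)
  ultimately show ?thesis by linarith
qed

lemma scaled_exp_le_linear_of_near_0:
  fixes c q x :: real
  assumes "c > 0" and "- ((c - q) / c) \<le> x" and "x \<le> 0"
  shows "c * exp x - c - q * x \<le> (c - q) / 2 * x"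
proof -
  have "c * exp x \<le> c * (1 + x + x\<^sup>2 / 2)"
    using exp_le_quadratic_of_nonpos[OF \<open>x \<le> 0\<close>] \<open>c > 0\<close> by simp
  moreover have "x * x \<le> x * - ((c - q) / c)"
    using mult_left_mono_neg[OF assms(2) assms(3)] .
  then have "c * x\<^sup>2 \<le> - (c - q) * x"
    using \<open>c > 0\<close> by (simp add: power2_eq_square field_simps)
  ultimately show ?thesis by (simp add: field_simps)
qed

lemma exp_ge_tangent: "a > 0 \<Longrightarrow> a * (1 + x - ln a) \<le> exp x" for a x :: real
  using exp_ge_add_one_self[of "x - ln a"] by (simp add: exp_diff field_simps)

lemma infinitely_many_sign_changesI:
  assumes pos: "\<And>T. \<exists>t>T. t \<in> S \<and> f t > 0" and neg: "\<And>T. \<exists>t>T. t \<in> S \<and> f t < 0"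
  shows "infinitely_many_sign_changes f S"
proof -
  have "\<exists>t. (\<forall>i\<le>N. t i \<in> S) \<and> (\<forall>i<N. t i < t (Suc i) \<and> f (t i) * f (t (Suc i)) < 0)
      \<and> f (t N) \<noteq> 0" for N
  proof (induction N)
    case 0
    from pos obtain t0 where "t0 \<in> S" "f t0 > 0" by blast
    then show ?case by (intro exI[of _ "\<lambda>_. t0"]) auto
  next
    case (Suc N)
    then obtain t where t: "\<forall>i\<le>N. t i \<in> S" "\<forall>i<N. t i < t (Suc i) \<and> f (t i) * f (t (Suc i)) < 0"
      and "f (t N) \<noteq> 0" by blast
    obtain u where u: "u > t N" "u \<in> S" "f (t N) * f u < 0"
    proof (cases "f (t N) > 0")
      case True
      with neg[of "t N"] show ?thesis using that by (meson mult_pos_neg)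
    next
      case False
      with \<open>f (t N) \<noteq> 0\<close> pos[of "t N"] show ?thesis using that by (meson mult_neg_pos not_less_iff_gr_or_eq)
    qed
    have "f u \<noteq> 0" using u(3) by auto
    with t u show ?case
      by (intro exI[of _ "t(Suc N := u)"]) (auto simp: le_Suc_eq less_Suc_eq)
  qed
  then show ?thesis unfolding infinitely_many_sign_changes_def by blast
qed


lemma infinitely_many_sign_changes_comp_exp:
  fixes f g y :: "real \<Rightarrow> real"
  assumes f_exp: "\<And>s. f (exp s) = g s * y s" and g_pos: "\<And>s. g s > 0"
    and pos: "\<And>S. \<exists>s>S. y s > 0" and neg: "\<And>S. \<exists>s>S. y s < 0"
  shows "infinitely_many_sign_changes f {0<..}"
proof -
  have exp_gt: "T < exp s" if "ln (max T 1) < s" for T s :: real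
    using exp_less_cancel_iff[of "ln (max T 1)" s] that by simp
  show ?thesis
  proof (rule infinitely_many_sign_changesI)
    show "\<exists>t>T. t \<in> {0<..} \<and> f t > 0" for T
      using pos[of "ln (max T 1)"] exp_gt f_exp g_pos by (metis exp_gt_zero greaterThan_iff mult_pos_pos)
    show "\<exists>t>T. t \<in> {0<..} \<and> f t < 0" for T
      using neg[of "ln (max T 1)"] exp_gt f_exp g_pos by (metis exp_gt_zero greaterThan_iff mult_pos_neg)
  qed
qed


section \<open>The damped Emden--Fowler oscillator\<close>

text \<open>\<open>v'' + m v' + e\<^sup>v = c\<close> as a first-order system; \<open>underdamped\<close> says that the
  linearisation at the equilibrium \<open>(v, y) = (ln c, 0)\<close> oscillates.\<close>

locale emden_fowler_system =
  fixes m c :: real and v y :: "real \<Rightarrow> real"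
  assumes m_nonneg: "0 \<le> m" and underdamped: "m\<^sup>2 / 4 < c"
    and v_deriv: "(v has_real_derivative y s) (at s)"
    and y_deriv: "(y has_real_derivative c - m * y s - exp (v s)) (at s)"
begin

lemma c_pos: "c > 0"
proof -
  have "0 \<le> m\<^sup>2 / 4" by simp
  with underdamped show ?thesis by linarith
qed

lemma exp_ln_c [simp]: "exp (ln c) = c"
  using c_pos by simp

definition energy :: "real \<Rightarrow> real" where
  "energy s = (y s)\<^sup>2 / 2 + exp (v s) - c * v s"

lemma energy_deriv: "(energy has_real_derivative - m * (y s)\<^sup>2) (at s)"
proof -
  have "(energy has_real_derivative
      2 * y s * (c - m * y s - exp (v s)) / 2 + exp (v s) * y s - c * y s) (at s)"
    unfolding energy_def[abs_def] by (auto intro!: derivative_eq_intros v_deriv y_deriv)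
  also have "2 * y s * (c - m * y s - exp (v s)) / 2 + exp (v s) * y s - c * y s = - m * (y s)\<^sup>2"
    by (simp add: power2_eq_square field_simps)
  finally show ?thesis .
qed

lemma energy_antimono: "a \<le> b \<Longrightarrow> energy b \<le> energy a"
  using increment_le_of_deriv_le[of a b energy _ 0] energy_deriv m_nonneg by force

lemma bounded_on_tail: "\<exists>B. \<forall>s\<ge>S. \<bar>v s\<bar> \<le> B \<and> \<bar>y s\<bar> \<le> B"
proof -
  define E where "E = energy S"
  define B\<^sub>v where "B\<^sub>v = \<bar>E / c\<bar> + \<bar>(E - 2 * c + 2 * c * ln (2 * c)) / c\<bar>"
  define B\<^sub>y where "B\<^sub>y = sqrt (2 * (E - c + c * ln c))"
  have "\<bar>v s\<bar> \<le> B\<^sub>v \<and> \<bar>y s\<bar> \<le> B\<^sub>y" if "s \<ge> S" for s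
  proof
    have E: "(y s)\<^sup>2 / 2 + exp (v s) - c * v s \<le> E"
      using energy_antimono[OF that] by (simp add: E_def energy_def)
    have "0 \<le> (y s)\<^sup>2 / 2 + exp (v s)" by simp
    then have "- E \<le> c * v s" using E by linarith
    then have "- E / c \<le> v s" using c_pos by (simp add: field_simps)
    moreover have "2 * c + 2 * c * v s - 2 * c * ln (2 * c) \<le> exp (v s)"
      using exp_ge_tangent[of "2 * c" "v s"] c_pos by (simp add: algebra_simps)
    then have "c * v s \<le> E - 2 * c + 2 * c * ln (2 * c)"
      using E zero_le_power2[of "y s"] by linarith
    then have "v s \<le> (E - 2 * c + 2 * c * ln (2 * c)) / c" using c_pos by (simp add: field_simps)
    ultimately show "\<bar>v s\<bar> \<le> B\<^sub>v" unfolding B\<^sub>v_def by linarith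
    have "c + c * v s - c * ln c \<le> exp (v s)"
      using exp_ge_tangent[of c "v s"] c_pos by (simp add: algebra_simps)
    then have "(y s)\<^sup>2 \<le> 2 * (E - c + c * ln c)" using E by (simp add: field_simps)
    then show "\<bar>y s\<bar> \<le> B\<^sub>y" unfolding B\<^sub>y_def by (metis real_sqrt_abs real_sqrt_le_mono)
  qed
  then show ?thesis by (intro exI[of _ "max B\<^sub>v B\<^sub>y"]) force
qed

lemma y_plus_m_v_deriv: "((\<lambda>s. y s + m * v s) has_real_derivative c - exp (v s)) (at s)"
proof -
  have "((\<lambda>s. y s + m * v s) has_real_derivative (c - m * y s - exp (v s)) + m * y s) (at s)"
    by (auto intro!: derivative_eq_intros v_deriv y_deriv)
  then show ?thesis by simp
qed

lemma y_plus_m_v_bounded_on_tail: "\<exists>B. \<forall>s\<ge>S. \<bar>y s + m * v s\<bar> \<le> B"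
proof -
  obtain B where B: "\<And>s. s \<ge> S \<Longrightarrow> \<bar>v s\<bar> \<le> B \<and> \<bar>y s\<bar> \<le> B"
    using bounded_on_tail by blast
  have "\<bar>y s + m * v s\<bar> \<le> B + m * B" if "s \<ge> S" for s
  proof -
    have "\<bar>y s + m * v s\<bar> \<le> \<bar>y s\<bar> + m * \<bar>v s\<bar>"
      using abs_triangle_ineq[of "y s" "m * v s"] m_nonneg by (simp add: abs_mult)
    also have "\<dots> \<le> B + m * B" using B[OF that] m_nonneg by (simp add: add_mono mult_left_mono)
    finally show ?thesis .
  qed
  then show ?thesis by blast
qed

lemma exp_v_not_eventually_below:
  assumes "\<delta> > 0" and below: "\<And>s. s \<ge> S \<Longrightarrow> exp (v s) \<le> c - \<delta>"
  shows False
proof -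
  obtain B where "\<forall>s\<ge>S. \<bar>y s + m * v s\<bar> \<le> B" using y_plus_m_v_bounded_on_tail by blast
  moreover have "\<not> (\<forall>s\<ge>S. \<bar>y s + m * v s\<bar> \<le> B)"
  proof (rule unbounded_of_deriv_ge_pos[OF y_plus_m_v_deriv _ \<open>\<delta> > 0\<close>])
    show "\<delta> \<le> c - exp (v s)" if "S \<le> s" for s using below[OF that] by simp
  qed
  ultimately show False by blast
qed

lemma exp_v_not_eventually_above:
  assumes "\<delta> > 0" and above: "\<And>s. s \<ge> S \<Longrightarrow> c + \<delta> \<le> exp (v s)"
  shows False
proof -
  obtain B where "\<forall>s\<ge>S. \<bar>y s + m * v s\<bar> \<le> B" using y_plus_m_v_bounded_on_tail by blast
  moreover have "\<not> (\<forall>s\<ge>S. \<bar>- (y s + m * v s)\<bar> \<le> B)"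
  proof (rule unbounded_of_deriv_ge_pos[where f' = "\<lambda>s. exp (v s) - c", OF _ _ \<open>\<delta> > 0\<close>])
    show "((\<lambda>s. - (y s + m * v s)) has_real_derivative exp (v s) - c) (at s)" for s
      using DERIV_minus[OF y_plus_m_v_deriv[of s]] by simp
    show "\<delta> \<le> exp (v s) - c" if "S \<le> s" for s using above[OF that] by simp
  qed
  ultimately show False by (metis abs_minus_cancel)
qed

text \<open>Backward uniqueness at the equilibrium, by Gronwall's inequality for
  \<open>D = (v - ln c)\<^sup>2 + y\<^sup>2\<close>, using that \<open>e\<^sup>v\<close> is Lipschitz on the compact range of \<open>v\<close>.\<close>

lemma equilibrium_backward:
  assumes "v s1 = ln c" and "y s1 = 0" and "s0 \<le> s1"
  shows "y s0 = 0"
proof -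
  have "continuous_on {s0..s1} (\<lambda>s. v s - ln c)"
    using v_deriv by (intro continuous_on_diff continuous_on_const continuous_at_imp_continuous_on
        ballI DERIV_isCont)
  then have "bounded ((\<lambda>s. v s - ln c) ` {s0..s1})"
    by (intro compact_imp_bounded compact_continuous_image compact_Icc)
  then obtain M where M: "\<And>s. s \<in> {s0..s1} \<Longrightarrow> \<bar>v s - ln c\<bar> \<le> M"
    unfolding bounded_real by blast
  define C where "C = c * exp M"
  define D where "D s = (v s - ln c)\<^sup>2 + (y s)\<^sup>2" for s
  define D' where "D' s = 2 * (v s - ln c) * y s + 2 * y s * (c - m * y s - exp (v s))" for s
  have "D s0 = 0"
  proof (rule eq_0_of_deriv_ge_neg_multiple[OF \<open>s0 \<le> s1\<close>, where K = "1 + C + 2 * m"])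
    show "(D has_real_derivative D' s) (at s)" for s
      unfolding D_def[abs_def] D'_def by (auto intro!: derivative_eq_intros v_deriv y_deriv)
    fix s assume "s0 \<le> s" "s \<le> s1"
    have "\<bar>exp (v s - ln c) - 1\<bar> \<le> exp \<bar>v s - ln c\<bar> * \<bar>v s - ln c\<bar>"
      by (rule abs_exp_minus_one_le)
    also have "\<dots> \<le> exp M * \<bar>v s - ln c\<bar>"
      using M[of s] \<open>s0 \<le> s\<close> \<open>s \<le> s1\<close> by (intro mult_right_mono) auto
    finally have "c * \<bar>exp (v s - ln c) - 1\<bar> \<le> C * \<bar>v s - ln c\<bar>"
      using c_pos by (simp add: C_def mult_left_mono)
    moreover have "\<bar>c - exp (v s)\<bar> = \<bar>c * (exp (v s - ln c) - 1)\<bar>"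
      using c_pos by (simp add: exp_diff right_diff_distrib abs_minus_commute)
    then have "\<bar>c - exp (v s)\<bar> = c * \<bar>exp (v s - ln c) - 1\<bar>"
      using c_pos by (simp add: abs_mult)
    ultimately have "- 2 * (v s - ln c) * y s - 2 * y s * (c - exp (v s)) + 2 * m * (y s)\<^sup>2
        \<le> (1 + C + 2 * m) * D s"
      unfolding D_def using c_pos by (intro cross_terms_le_sum_squares m_nonneg) (simp_all add: C_def)
    moreover have "D' s = 2 * (v s - ln c) * y s + 2 * y s * (c - exp (v s)) - 2 * m * (y s)\<^sup>2"
      by (simp add: D'_def algebra_simps power2_eq_square)
    ultimately show "0 \<le> (1 + C + 2 * m) * D s + D' s" by linarith
  qed (use assms in \<open>simp_all add: D_def\<close>)
  then show ?thesis by (simp add: D_def add_nonneg_eq_0_iff)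
qed

text \<open>The factor \<open>exp(m s / 2)\<close> removes the damping term: \<open>p = exp(m s / 2) \<sigma> (v - ln c)\<close>
  satisfies \<open>p'' = exp(m s / 2) \<sigma> (m\<^sup>2 / 4 (v - ln c) + c - e\<^sup>v)\<close>.\<close>

lemma eq_ln_c_of_sturm_bound:
  assumes "\<sigma> \<noteq> 0" and "\<epsilon> > 0"
    and nonneg: "\<And>s. s > S \<Longrightarrow> 0 \<le> \<sigma> * (v s - ln c)"
    and le: "\<And>s. s > S \<Longrightarrow>
      \<sigma> * (m\<^sup>2 / 4 * (v s - ln c) + c - exp (v s)) \<le> - \<epsilon> * (\<sigma> * (v s - ln c))"
    and "s > S"
  shows "v s = ln c"
proof -
  define p where "p s = exp (m * s / 2) * (\<sigma> * (v s - ln c))" for s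
  define p' where "p' s = exp (m * s / 2) * (\<sigma> * (m / 2 * (v s - ln c) + y s))" for s
  define p'' where "p'' s = exp (m * s / 2) * (\<sigma> * (m\<^sup>2 / 4 * (v s - ln c) + c - exp (v s)))" for s
  have "p s = 0"
  proof (rule nonneg_eq_0_of_second_deriv_le[OF _ _ _ _ \<open>\<epsilon> > 0\<close> \<open>s > S\<close>])
    show "(p has_real_derivative p' x) (at x)" for x
    proof -
      have "(p has_real_derivative exp (m * x / 2) * (m / 2) * (\<sigma> * (v x - ln c))
          + exp (m * x / 2) * (\<sigma> * y x)) (at x)"
        unfolding p_def[abs_def] by (auto intro!: derivative_eq_intros v_deriv)
      also have "exp (m * x / 2) * (m / 2) * (\<sigma> * (v x - ln c)) + exp (m * x / 2) * (\<sigma> * y x) = p' x"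
        by (simp add: p'_def algebra_simps)
      finally show ?thesis .
    qed
    show "(p' has_real_derivative p'' x) (at x)" for x
    proof -
      have "(p' has_real_derivative exp (m * x / 2) * (m / 2) * (\<sigma> * (m / 2 * (v x - ln c) + y x))
          + exp (m * x / 2) * (\<sigma> * (m / 2 * y x + (c - m * y x - exp (v x))))) (at x)"
        unfolding p'_def[abs_def] by (auto intro!: derivative_eq_intros v_deriv y_deriv)
      also have "exp (m * x / 2) * (m / 2) * (\<sigma> * (m / 2 * (v x - ln c) + y x))
          + exp (m * x / 2) * (\<sigma> * (m / 2 * y x + (c - m * y x - exp (v x)))) = p'' x"
        by (simp add: p''_def algebra_simps power2_eq_square)
      finally show ?thesis .
    qed
    show "0 \<le> p x" if "x > S" for x using nonneg[OF that] by (simp add: p_def)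
    show "p'' x \<le> - \<epsilon> * p x" if "x > S" for x
      using mult_left_mono[OF le[OF that], of "exp (m * x / 2)"] by (simp add: p_def p''_def mult.left_commute)
  qed
  then show ?thesis using \<open>\<sigma> \<noteq> 0\<close> by (simp add: p_def)
qed

end

locale emden_fowler_trajectory = emden_fowler_system +
  assumes y_nonzero_early: "\<exists>s0\<le>s1. y s0 \<noteq> 0"
begin

lemma not_eventually_equilibrium:
  assumes "\<And>s. s > S \<Longrightarrow> v s = ln c"
  shows False
proof -
  have "y (S + 1) = 0"
    by (rule DERIV_local_const[OF v_deriv, of 1]) (use assms in \<open>auto simp: abs_if split: if_splits\<close>)
  moreover obtain s0 where "s0 \<le> S + 1" "y s0 \<noteq> 0"
    using y_nonzero_early by blast
  ultimately show False using equilibrium_backward[of "S + 1" s0] assms by simp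
qed

lemma not_eventually_nonpos:
  assumes nonpos: "\<And>s. s > S \<Longrightarrow> y s \<le> 0"
  shows False
proof -
  have v_antimono: "v b \<le> v a" if "S < a" "a \<le> b" for a b
    using increment_le_of_deriv_le[of a b v y 0] v_deriv nonpos that by force
  have above: "ln c \<le> v s" if "s > S" for s
  proof (rule ccontr)
    assume "\<not> ln c \<le> v s"
    then have "exp (v s) < c" by (metis exp_less_cancel_iff exp_ln_c not_le)
    moreover have "exp (v x) \<le> c - (c - exp (v s))" if "x \<ge> s" for x
      using v_antimono[of s x] \<open>s > S\<close> that by simp
    ultimately show False using exp_v_not_eventually_below[of "c - exp (v s)" s] by simp
  qed
  have "v s = ln c" if "s > S" for s
  proof (rule eq_ln_c_of_sturm_bound[of 1 "c - m\<^sup>2 / 4" S, OF _ _ _ _ that])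
    show "c - m\<^sup>2 / 4 > 0" using underdamped by simp
    show "0 \<le> 1 * (v x - ln c)" if "x > S" for x using above[OF that] by simp
    show "1 * (m\<^sup>2 / 4 * (v x - ln c) + c - exp (v x)) \<le> - (c - m\<^sup>2 / 4) * (1 * (v x - ln c))"
      for x using exp_ge_tangent[OF c_pos, of "v x"] by (simp add: algebra_simps)
  qed simp
  then show False by (rule not_eventually_equilibrium)
qed

lemma not_eventually_nonneg:
  assumes nonneg: "\<And>s. s > S \<Longrightarrow> 0 \<le> y s"
  shows False
proof -
  have v_mono: "v a \<le> v b" if "S < a" "a \<le> b" for a b
    using increment_ge_of_deriv_ge[of a b v y 0] v_deriv nonneg that by force
  have below: "v s \<le> ln c" if "s > S" for s
  proof (rule ccontr)
    assume "\<not> v s \<le> ln c"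
    then have "c < exp (v s)" by (metis exp_less_cancel_iff exp_ln_c not_le)
    moreover have "c + (exp (v s) - c) \<le> exp (v x)" if "x \<ge> s" for x
      using v_mono[of s x] \<open>s > S\<close> that by simp
    ultimately show False using exp_v_not_eventually_above[of "exp (v s) - c" s] by simp
  qed
  txt \<open>Below the equilibrium the tangent bound for \<open>exp\<close> points the wrong way; the quadratic
    one closes the estimate within distance \<open>\<delta>\<close> of \<open>ln c\<close>.\<close>
  define \<delta> where "\<delta> = (c - m\<^sup>2 / 4) / c"
  have "\<delta> > 0" using underdamped c_pos by (simp add: \<delta>_def)
  have "\<exists>S'>S. ln c - \<delta> \<le> v S'"
  proof (rule ccontr)
    assume "\<not> (\<exists>S'>S. ln c - \<delta> \<le> v S')"
    then have "v s < ln c - \<delta>" if "s \<ge> S + 1" for s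
      using that by (meson less_add_one not_le order_less_le_trans)
    then have "exp (v s) \<le> c - (c - c * exp (- \<delta>))" if "s \<ge> S + 1" for s
    proof -
      have "exp (v s) \<le> exp (ln c - \<delta>)" using \<open>s \<ge> S + 1 \<Longrightarrow> v s < ln c - \<delta>\<close>[OF that] by simp
      then show ?thesis by (simp add: exp_diff exp_minus field_simps)
    qed
    moreover have "c - c * exp (- \<delta>) > 0" using c_pos \<open>\<delta> > 0\<close> by simp
    ultimately show False using exp_v_not_eventually_below by blast
  qed
  then obtain S' where "S' > S" and near: "\<And>s. s > S' \<Longrightarrow> ln c - \<delta> \<le> v s"
    using v_mono by (meson less_imp_le order_trans)
  have "v s = ln c" if "s > S'" for s
  proof (rule eq_ln_c_of_sturm_bound[of "- 1" "(c - m\<^sup>2 / 4) / 2" S', OF _ _ _ _ that])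
    show "(c - m\<^sup>2 / 4) / 2 > 0" using underdamped by simp
    show "0 \<le> - 1 * (v x - ln c)" if "x > S'" for x using below[of x] \<open>S' > S\<close> that by simp
    show "- 1 * (m\<^sup>2 / 4 * (v x - ln c) + c - exp (v x))
        \<le> - ((c - m\<^sup>2 / 4) / 2) * (- 1 * (v x - ln c))" if "x > S'" for x
    proof -
      have "- ((c - m\<^sup>2 / 4) / c) \<le> v x - ln c" using near[OF that] by (simp add: \<delta>_def)
      moreover have "v x - ln c \<le> 0" using below[of x] \<open>S' > S\<close> that by simp
      ultimately have "c * exp (v x - ln c) - c - m\<^sup>2 / 4 * (v x - ln c)
          \<le> (c - m\<^sup>2 / 4) / 2 * (v x - ln c)"
        by (rule scaled_exp_le_linear_of_near_0[OF c_pos])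
      moreover have "c * exp (v x - ln c) = exp (v x)" using c_pos by (simp add: exp_diff)
      ultimately show ?thesis by (simp add: field_simps)
    qed
  qed simp
  then show False by (rule not_eventually_equilibrium)
qed

lemma y_pos_on_tail: "\<exists>s>S. y s > 0"
  using not_eventually_nonpos by (meson not_le)

lemma y_neg_on_tail: "\<exists>s>S. y s < 0"
  using not_eventually_nonneg by (meson not_le)

end


section \<open>The generalised Gelfand problem\<close>

lemma gelfand_emden_fowler_system:
  fixes \<alpha> k :: real and w w' :: "real \<Rightarrow> real"
  assumes "2 < k" and "k < 10 + 4 * \<alpha>"
    and w_deriv: "\<And>t. t > 0 \<Longrightarrow> (w has_real_derivative w' t) (at t)"
    and ode: "\<And>t. t > 0 \<Longrightarrow>
       (w' has_real_derivative (- (k - 1) / t * w' t - t powr \<alpha> * exp (w t))) (at t)"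
  shows "emden_fowler_system (k - 2) ((k - 2) * (\<alpha> + 2))
    (\<lambda>s. w (exp s) + (\<alpha> + 2) * s) (\<lambda>s. exp s * w' (exp s) + (\<alpha> + 2))"
proof
  show "0 \<le> k - 2" using \<open>2 < k\<close> by simp
  have "(k - 2) * (k - 2) < (k - 2) * (4 * (\<alpha> + 2))"
    using assms(1,2) by (intro mult_strict_left_mono) auto
  then show "(k - 2)\<^sup>2 / 4 < (k - 2) * (\<alpha> + 2)" by (simp add: power2_eq_square field_simps)
  fix s
  show "((\<lambda>s. w (exp s) + (\<alpha> + 2) * s) has_real_derivative exp s * w' (exp s) + (\<alpha> + 2)) (at s)"
    using DERIV_chain2[OF w_deriv[OF exp_gt_zero] DERIV_exp]
    by (auto intro!: derivative_eq_intros simp: mult.commute)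
  have "((\<lambda>s. exp s * w' (exp s) + (\<alpha> + 2)) has_real_derivative
      exp s * w' (exp s) + exp s * ((- (k - 1) / exp s * w' (exp s) - exp s powr \<alpha> * exp (w (exp s))) * exp s)) (at s)"
    using DERIV_chain2[OF ode[OF exp_gt_zero] DERIV_exp]
    by (auto intro!: derivative_eq_intros)
  also have "exp s * w' (exp s) + exp s * ((- (k - 1) / exp s * w' (exp s) - exp s powr \<alpha> * exp (w (exp s))) * exp s)
      = (k - 2) * (\<alpha> + 2) - (k - 2) * (exp s * w' (exp s) + (\<alpha> + 2)) - exp (w (exp s) + (\<alpha> + 2) * s)"
    by (simp add: powr_def exp_add[symmetric] field_simps)
  finally show "((\<lambda>s. exp s * w' (exp s) + (\<alpha> + 2)) has_real_derivative (k - 2) * (\<alpha> + 2)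
      - (k - 2) * (exp s * w' (exp s) + (\<alpha> + 2)) - exp (w (exp s) + (\<alpha> + 2) * s)) (at s)" .
qed

lemma exists_pos_near_0:
  fixes w' :: "real \<Rightarrow> real"
  assumes "continuous_on {0..} w'" and "w' 0 = 0" and "a > 0" and "T > 0"
  shows "\<exists>t\<in>{0<..<T}. t * w' t + a > 0"
proof -
  have "(w' \<longlongrightarrow> w' 0) (at 0 within {0..})"
    using assms(1) by (simp add: continuous_on_def)
  then have "(w' \<longlongrightarrow> 0) (at 0 within {0..})"
    unfolding \<open>w' 0 = 0\<close> .
  then have "(w' \<longlongrightarrow> 0) (at_right 0)"
    by (rule tendsto_within_subset) auto
  then have "((\<lambda>t. t * w' t + a) \<longlongrightarrow> 0 * 0 + a) (at_right 0)"
    by (intro tendsto_intros) auto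
  then have "\<forall>\<^sub>F t in at_right 0. t * w' t + a > 0"
    using \<open>a > 0\<close> by (intro order_tendstoD(1)) auto
  moreover have "\<forall>\<^sub>F t in at_right 0. t \<in> {0<..<T}"
    using \<open>T > 0\<close> by (rule eventually_at_right_real)
  ultimately show ?thesis
    using eventually_happens'[OF trivial_limit_at_right_real] eventually_conj by blast
qed

lemma gelfand_emden_fowler_trajectory:
  fixes \<alpha> k :: real and w w' :: "real \<Rightarrow> real"
  assumes "2 < k" and "k < 10 + 4 * \<alpha>"
    and "w' 0 = 0" and "continuous_on {0..} w'"
    and "\<And>t. t > 0 \<Longrightarrow> (w has_real_derivative w' t) (at t)"
    and "\<And>t. t > 0 \<Longrightarrow>
       (w' has_real_derivative (- (k - 1) / t * w' t - t powr \<alpha> * exp (w t))) (at t)"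
  shows "emden_fowler_trajectory (k - 2) ((k - 2) * (\<alpha> + 2))
    (\<lambda>s. w (exp s) + (\<alpha> + 2) * s) (\<lambda>s. exp s * w' (exp s) + (\<alpha> + 2))"
proof -
  interpret emden_fowler_system "k - 2" "(k - 2) * (\<alpha> + 2)"
    "\<lambda>s. w (exp s) + (\<alpha> + 2) * s" "\<lambda>s. exp s * w' (exp s) + (\<alpha> + 2)"
    using assms by (intro gelfand_emden_fowler_system) auto
  show ?thesis
  proof
    txt \<open>\<open>y(ln t) = t w'(t) + \<alpha> + 2 \<rightarrow> \<alpha> + 2\<close> as \<open>t \<rightarrow> 0\<^sup>+\<close>.\<close>
    fix s1
    obtain t where t: "t \<in> {0<..<exp s1}" "t * w' t + (\<alpha> + 2) > 0"
      using exists_pos_near_0[OF assms(4,3), of "\<alpha> + 2" "exp s1"] assms(1,2) by auto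
    then have "ln t < s1" using ln_less_cancel_iff[of t "exp s1"] by simp
    with t show "\<exists>s0\<le>s1. exp s0 * w' (exp s0) + (\<alpha> + 2) \<noteq> 0"
      by (intro exI[of _ "ln t"]) auto
  qed
qed

lemma deriv_gelfand_lambda:
  assumes "t > 0" and "(w has_real_derivative w' t) (at t)"
  shows "deriv (gelfand_lambda \<alpha> w) t = t powr (\<alpha> + 1) * exp (w t) * (t * w' t + (\<alpha> + 2))"
proof (rule DERIV_imp_deriv)
  have "(gelfand_lambda \<alpha> w has_real_derivative
      (\<alpha> + 2) * t powr (\<alpha> + 2 - 1) * exp (w t) + t powr (\<alpha> + 2) * (exp (w t) * w' t)) (at t)"
    unfolding gelfand_lambda_def[abs_def] using assms
    by (auto intro!: derivative_eq_intros)
  also have "t powr (\<alpha> + 2) = t powr (\<alpha> + 1) * t powr 1"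
    by (simp only: powr_add[symmetric]) (simp add: add.commute)
  also have "\<dots> = t powr (\<alpha> + 1) * t"
    using \<open>t > 0\<close> by simp
  finally show "(gelfand_lambda \<alpha> w has_real_derivative
      t powr (\<alpha> + 1) * exp (w t) * (t * w' t + (\<alpha> + 2))) (at t)"
    by (simp add: algebra_simps)
qed

theorem theorem3p1:
  fixes \<alpha> :: real and n :: nat and w w' :: "real \<Rightarrow> real"
  assumes alpha_pos: "\<alpha> > 0"
    and n_ge: "3 \<le> n" and n_lt: "real n < 10 + 4 * \<alpha>"
    and w0: "w 0 = 0" and w'0: "w' 0 = 0"
    and w_deriv: "\<And>t. t \<ge> 0 \<Longrightarrow> (w has_real_derivative w' t) (at t within {0..})"
    and w'_cont: "continuous_on {0..} w'"
    and ode: "\<And>t. t > 0 \<Longrightarrow>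
       (w' has_real_derivative (- (real n - 1) / t * w' t - t powr \<alpha> * exp (w t))) (at t)"
  shows "infinitely_many_sign_changes (deriv (gelfand_lambda \<alpha> w)) {0<..}"
proof -
  have w_deriv_at: "(w has_real_derivative w' t) (at t)" if "t > 0" for t
    using w_deriv[of t] that at_within_interior[of t "{0..}"] by simp
  define y where "y s = exp s * w' (exp s) + (\<alpha> + 2)" for s
  interpret emden_fowler_trajectory "real n - 2" "(real n - 2) * (\<alpha> + 2)"
    "\<lambda>s. w (exp s) + (\<alpha> + 2) * s" y
    unfolding y_def[abs_def] using n_ge n_lt
    by (intro gelfand_emden_fowler_trajectory w'0 w'_cont w_deriv_at ode) auto
  show ?thesis
  proof (rule infinitely_many_sign_changes_comp_exp[OF _ _ y_pos_on_tail y_neg_on_tail])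
    show "deriv (gelfand_lambda \<alpha> w) (exp s) = exp s powr (\<alpha> + 1) * exp (w (exp s)) * y s" for s
      using deriv_gelfand_lambda[of "exp s" w w' \<alpha>] w_deriv_at[of "exp s"] by (simp add: y_def)
  qed simp
qed

end
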